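(* Let $\mathcal{I}$ be a finite index set (sequence of such sets with $|\mathcal{I}|\to\infty$), and for $i\in\mathcal{I}$ let $X_i$ be mutually independent real random variables with finite fourth moments, variances $\sigma_i^2>0$ and kurtosis $\kappa_i$. For each $i$ let $X_i^{(1)},\dots,X_i^{(R_i)}$ be i.i.d. copies of $X_i$, independent of everything else, with sample mean $\bar X_i$ and sample variance $\hat\sigma_i^2=\frac{1}{R_i-1}\sum_{k=1}^{R_i}(X_i^{(k)}-\bar X_i)^2$. Let $X_{\mathcal{I}}=\sum_{i\in\mathcal{I}}X_i$, $\hat\mu_{\mathcal{I}}=\sum_{i\in\mathcal{I}}\bar X_i$, $\bar\sigma^2=\frac1{|\mathcal{I}|}\sum_{i}\sigma_i^2$, and $\gamma^2=\big(\frac1{|\mathcal{I}|}\sum_i\sigma_i^4-\bar\sigma^4\big)/\bar\sigma^4$. Assume (R1) $R_i\ge2$ for all $i\in\mathcal{I}$, the $R_i$ being fixed integers; (R2) $\kappa_i\le\kappa_{\max}$ for all $i$, with $\kappa_{\max}$ independent of $|\mathcal{I}|$; (R3) $\gamma^2$ is bounded as $|\mathcal{I}|\to\infty$. Then $\hat\sigma^2_{(X_{\mathcal{I}}-\hat\mu_{\mathcal{I}})}=\sum_{i\in\mathcal{I}}\hat\sigma_i^2(1+1/R_i)$ is an unbiased estimator of $\operatorname{Var}(X_{\mathcal{I}}-\hat\mu_{\mathcal{I}})$, and its variance is $O(|\mathcal{I}|\bar\sigma^4)$ as $|\mathcal{I}|\to\infty$.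
   Context: Kurtosis of $Y$ with variance $s^2$ is $\operatorname{E}[(Y-\operatorname{E}Y)^4]/s^4$. $f=O(g)$ means $f/g$ is eventually bounded. *)

theory Defs
  imports "HOL-Probability.Probability" "HOL-Library.Landau_Symbols"
begin

definition kurtosis :: "'a measure \<Rightarrow> ('a \<Rightarrow> real) \<Rightarrow> real" where
  "kurtosis M Y = (\<integral>x. (Y x - (\<integral>y. Y y \<partial>M)) ^ 4 \<partial>M) / (prob_space.variance M Y) ^ 2"

definition sample_mean :: "(nat \<Rightarrow> 'a \<Rightarrow> real) \<Rightarrow> nat \<Rightarrow> 'a \<Rightarrow> real" where
  "sample_mean Y R \<omega> = (\<Sum>k=1..R. Y k \<omega>) / real R"

definition sample_var :: "(nat \<Rightarrow> 'a \<Rightarrow> real) \<Rightarrow> nat \<Rightarrow> 'a \<Rightarrow> real" where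
  "sample_var Y R \<omega> = (\<Sum>k=1..R. (Y k \<omega> - sample_mean Y R \<omega>) ^ 2) / (real R - 1)"

text \<open>All random variables of one instance, jointly indexed: Inl i is X_i, Inr (i,k) is X_i^(k).\<close>
definition all_vars :: "('i \<Rightarrow> 'a \<Rightarrow> real) \<Rightarrow> ('i \<Rightarrow> nat \<Rightarrow> 'a \<Rightarrow> real) \<Rightarrow> 'i + ('i \<times> nat) \<Rightarrow> 'a \<Rightarrow> real" where
  "all_vars X Y j = (case j of Inl i \<Rightarrow> X i | Inr (i, k) \<Rightarrow> Y i k)"

definition all_index :: "'i set \<Rightarrow> ('i \<Rightarrow> nat) \<Rightarrow> ('i + ('i \<times> nat)) set" where
  "all_index I R = Inl ` I \<union> Inr ` (SIGMA i:I. {1..R i})"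

definition sigma_bar2 :: "'a measure \<Rightarrow> ('i \<Rightarrow> 'a \<Rightarrow> real) \<Rightarrow> 'i set \<Rightarrow> real" where
  "sigma_bar2 M X I = (\<Sum>i\<in>I. prob_space.variance M (X i)) / real (card I)"

definition gamma2 :: "'a measure \<Rightarrow> ('i \<Rightarrow> 'a \<Rightarrow> real) \<Rightarrow> 'i set \<Rightarrow> real" where
  "gamma2 M X I = ((\<Sum>i\<in>I. (prob_space.variance M (X i)) ^ 2) / real (card I)
                    - (sigma_bar2 M X I) ^ 2) / (sigma_bar2 M X I) ^ 2"

definition centred_sum :: "('i \<Rightarrow> 'a \<Rightarrow> real) \<Rightarrow> ('i \<Rightarrow> nat \<Rightarrow> 'a \<Rightarrow> real) \<Rightarrow> ('i \<Rightarrow> nat) \<Rightarrow> 'i set \<Rightarrow> 'a \<Rightarrow> real" where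
  "centred_sum X Y R I \<omega> = (\<Sum>i\<in>I. X i \<omega>) - (\<Sum>i\<in>I. sample_mean (Y i) (R i) \<omega>)"

definition var_estimator :: "('i \<Rightarrow> nat \<Rightarrow> 'a \<Rightarrow> real) \<Rightarrow> ('i \<Rightarrow> nat) \<Rightarrow> 'i set \<Rightarrow> 'a \<Rightarrow> real" where
  "var_estimator Y R I \<omega> = (\<Sum>i\<in>I. sample_var (Y i) (R i) \<omega> * (1 + 1 / real (R i)))"

end

theory Submission
  imports Defs
begin

text \<open>
  The blocks (X_i, X_i^(1), ..., X_i^(R_i)) are independent across i, so both the variance of
  X_I - \<mu>hat_I and the variance of the estimator split into sums over i.  Within a block,
  X_i is independent of the sample mean, whence Var(X_i - Xbar_i) = \<sigma>_i^2 (1 + 1/R_i), and the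
  sample variance is unbiased for \<sigma>_i^2; this gives unbiasedness.  By Cauchy-Schwarz,
  \<sigma>hat_i^4 <= R_i/(R_i - 1)^2 \<Sum>_k (X_i^(k) - \<mu>_i)^4, so the i-th summand of the estimator has
  variance at most ((R_i + 1)/(R_i - 1))^2 \<kappa>_i \<sigma>_i^4 <= 9 \<kappa>max \<sigma>_i^4.  Finally
  \<Sum>_i \<sigma>_i^4 = |I| \<sigma>bar^4 (1 + \<gamma>^2), which is O(|I| \<sigma>bar^4) by (R3).
\<close>

section \<open>Square-integrable functions\<close>

definition square_integrable :: "'a measure \<Rightarrow> ('a \<Rightarrow> real) \<Rightarrow> bool" where
  "square_integrable M f \<longleftrightarrow> f \<in> borel_measurable M \<and> integrable M (\<lambda>x. (f x)\<^sup>2)"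

lemma integrable_mult_square_integrable:
  assumes "square_integrable M f" "square_integrable M g"
  shows "integrable M (\<lambda>x. f x * g x)"
proof (rule Bochner_Integration.integrable_bound)
  show "integrable M (\<lambda>x. (f x)\<^sup>2 + (g x)\<^sup>2)" "(\<lambda>x. f x * g x) \<in> borel_measurable M"
    using assms by (auto simp: square_integrable_def)
  have "\<bar>a * b\<bar> \<le> a\<^sup>2 + b\<^sup>2" for a b :: real
  proof -
    have "2 * (\<bar>a\<bar> * \<bar>b\<bar>) \<le> a\<^sup>2 + b\<^sup>2"
      using sum_squares_bound[of "\<bar>a\<bar>" "\<bar>b\<bar>"] by (simp add: mult.assoc)
    moreover have "0 \<le> \<bar>a\<bar> * \<bar>b\<bar>"
      by simp
    ultimately show ?thesis
      unfolding abs_mult by linarith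
  qed
  then show "AE x in M. norm (f x * g x) \<le> norm ((f x)\<^sup>2 + (g x)\<^sup>2)"
    by auto
qed

lemma square_integrable_add:
  assumes "square_integrable M f" "square_integrable M g"
  shows "square_integrable M (\<lambda>x. f x + g x)"
proof -
  have "(\<lambda>x. (f x + g x)\<^sup>2) = (\<lambda>x. (f x)\<^sup>2 + (g x)\<^sup>2 + 2 * (f x * g x))"
    by (simp add: power2_sum mult.assoc)
  then show ?thesis
    using assms integrable_mult_square_integrable[OF assms] by (auto simp: square_integrable_def)
qed

lemma square_integrable_cmult: "square_integrable M f \<Longrightarrow> square_integrable M (\<lambda>x. c * f x)"
  by (auto simp: square_integrable_def power_mult_distrib)

lemma square_integrable_diff:
  "square_integrable M f \<Longrightarrow> square_integrable M g \<Longrightarrow> square_integrable M (\<lambda>x. f x - g x)"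
  using square_integrable_add[of M f "\<lambda>x. -1 * g x"] square_integrable_cmult[of M g "-1"] by simp

lemma square_integrable_sum:
  "(\<And>a. a \<in> S \<Longrightarrow> square_integrable M (f a)) \<Longrightarrow> square_integrable M (\<lambda>x. \<Sum>a\<in>S. f a x)"
proof (induction S rule: infinite_finite_induct)
  case (insert a S)
  then show ?case
    by (simp add: square_integrable_add)
qed (simp_all add: square_integrable_def)

lemma (in finite_measure) square_integrable_const: "square_integrable M (\<lambda>x. c)"
  by (simp add: square_integrable_def)

lemma (in finite_measure) integrable_if_square_integrable:
  "square_integrable M f \<Longrightarrow> integrable M f"
  using square_integrable_imp_integrable by (auto simp: square_integrable_def)

lemma (in finite_measure) square_integrable_if_integrable_power4:
  fixes f :: "'a \<Rightarrow> real"
  assumes "f \<in> borel_measurable M" "integrable M (\<lambda>x. (f x) ^ 4)"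
  shows "square_integrable M f"
  unfolding square_integrable_def
proof
  have square_le: "t\<^sup>2 \<le> 1 + t ^ 4" for t :: real
  proof -
    have "2 * t\<^sup>2 \<le> t ^ 4 + 1"
      using sum_squares_bound[of "t\<^sup>2" 1] by (simp flip: power_mult)
    then show ?thesis using zero_le_power2[of t] by linarith
  qed
  show "integrable M (\<lambda>x. (f x)\<^sup>2)"
  proof (rule Bochner_Integration.integrable_bound[where f="\<lambda>x. 1 + f x ^ 4"])
    show "AE x in M. norm ((f x)\<^sup>2) \<le> norm (1 + f x ^ 4)"
    proof (rule AE_I2)
      fix x
      have "norm ((f x)\<^sup>2) = (f x)\<^sup>2" by simp
      also have "\<dots> \<le> 1 + f x ^ 4" by (rule square_le)
      also have "\<dots> \<le> norm (1 + f x ^ 4)" unfolding real_norm_def by (rule abs_ge_self)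
      finally show "norm ((f x)\<^sup>2) \<le> norm (1 + f x ^ 4)" .
    qed
  qed (use assms in simp_all)
qed (rule assms)

lemma (in finite_measure) integrable_power4_diff:
  fixes f :: "'a \<Rightarrow> real"
  assumes "f \<in> borel_measurable M" "integrable M (\<lambda>x. (f x) ^ 4)"
  shows "integrable M (\<lambda>x. (f x - c) ^ 4)"
proof (rule Bochner_Integration.integrable_bound[where f="\<lambda>x. 8 * f x ^ 4 + 8 * c ^ 4"])
  have power4_diff_le: "(a - b) ^ 4 \<le> 8 * a ^ 4 + 8 * b ^ 4" for a b :: real
  proof -
    have "(a - b)\<^sup>2 \<le> 2 * a\<^sup>2 + 2 * b\<^sup>2"
      using sum_squares_bound[of a "-b"] by (simp add: power2_diff)
    then have "((a - b)\<^sup>2)\<^sup>2 \<le> (2 * a\<^sup>2 + 2 * b\<^sup>2)\<^sup>2"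
      by (rule power_mono) simp
    also have "\<dots> \<le> 8 * a ^ 4 + 8 * b ^ 4"
      using sum_squares_bound[of "a\<^sup>2" "b\<^sup>2"] by (simp add: power2_sum flip: power_mult)
    finally show ?thesis by (simp flip: power_mult)
  qed
  show "AE x in M. norm ((f x - c) ^ 4) \<le> norm (8 * f x ^ 4 + 8 * c ^ 4)"
  proof (rule AE_I2)
    fix x
    have "norm ((f x - c) ^ 4) = (f x - c) ^ 4" by simp
    also have "\<dots> \<le> 8 * f x ^ 4 + 8 * c ^ 4" by (rule power4_diff_le)
    also have "\<dots> \<le> norm (8 * f x ^ 4 + 8 * c ^ 4)" unfolding real_norm_def by (rule abs_ge_self)
    finally show "norm ((f x - c) ^ 4) \<le> norm (8 * f x ^ 4 + 8 * c ^ 4)" .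
  qed
qed (use assms in auto)

section \<open>Independent and identically distributed variables\<close>

lemma integral_comp_eq_if_distr_eq:
  fixes g :: "'b \<Rightarrow> real"
  assumes "distr M N U = distr M N V" "U \<in> M \<rightarrow>\<^sub>M N" "V \<in> M \<rightarrow>\<^sub>M N" "g \<in> borel_measurable N"
  shows "integrable M (\<lambda>x. g (U x)) \<longleftrightarrow> integrable M (\<lambda>x. g (V x))"
    and "(\<integral>x. g (U x) \<partial>M) = (\<integral>x. g (V x) \<partial>M)"
  using integrable_distr_eq[of U M N g] integrable_distr_eq[of V M N g]
    integral_distr[of U M N g] integral_distr[of V M N g] assms
  by simp_all

lemma (in prob_space) indep_var_restrict_compose:
  assumes "indep_vars M' Z J" "A \<inter> B = {}" "A \<subseteq> J" "B \<subseteq> J"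
    and "f \<in> PiM A M' \<rightarrow>\<^sub>M N" "g \<in> PiM B M' \<rightarrow>\<^sub>M K"
  shows "indep_var N (\<lambda>\<omega>. f (restrict (\<lambda>j. Z j \<omega>) A)) K (\<lambda>\<omega>. g (restrict (\<lambda>j. Z j \<omega>) B))"
  using indep_var_compose[OF indep_var_restrict[OF assms(1-4)] assms(5,6)] by (simp add: comp_def)

lemma (in prob_space) integral_centred_mult_eq_0_if_indep:
  fixes U V :: "'a \<Rightarrow> real"
  assumes "indep_var borel U borel V" "integrable M U" "integrable M V"
  shows "(\<integral>x. (U x - expectation U) * (V x - expectation V) \<partial>M) = 0"
proof -
  have "indep_var borel ((\<lambda>t. t - expectation U) \<circ> U) borel ((\<lambda>t. t - expectation V) \<circ> V)"
    by (rule indep_var_compose[OF assms(1)]) auto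
  then have "indep_var borel (\<lambda>x. U x - expectation U) borel (\<lambda>x. V x - expectation V)"
    by (simp add: comp_def)
  then have "(\<integral>x. (U x - expectation U) * (V x - expectation V) \<partial>M)
      = (\<integral>x. U x - expectation U \<partial>M) * (\<integral>x. V x - expectation V \<partial>M)"
    using assms by (intro indep_var_lebesgue_integral) auto
  also have "\<dots> = 0"
    using assms by (simp add: prob_space)
  finally show ?thesis .
qed

lemma (in prob_space) variance_sum_indep:
  fixes U :: "'b \<Rightarrow> 'a \<Rightarrow> real"
  assumes "finite S" and square_integrable: "\<And>a. a \<in> S \<Longrightarrow> square_integrable M (U a)"
    and indep: "\<And>a b. a \<in> S \<Longrightarrow> b \<in> S \<Longrightarrow> a \<noteq> b \<Longrightarrow> indep_var borel (U a) borel (U b)"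
  shows "variance (\<lambda>x. \<Sum>a\<in>S. U a x) = (\<Sum>a\<in>S. variance (U a))"
proof -
  define centred where "centred a x = U a x - expectation (U a)" for a x
  have integrable: "integrable M (U a)" if "a \<in> S" for a
    using square_integrable[OF that] by (rule integrable_if_square_integrable)
  have "variance (\<lambda>x. \<Sum>a\<in>S. U a x) = (\<integral>x. (\<Sum>a\<in>S. centred a x)\<^sup>2 \<partial>M)"
    using integrable by (simp add: centred_def sum_subtractf Bochner_Integration.integral_sum)
  also have "\<dots> = (\<integral>x. (\<Sum>a\<in>S. \<Sum>b\<in>S. centred a x * centred b x) \<partial>M)"
    by (simp add: power2_eq_square sum_product)
  also have "\<dots> = (\<Sum>a\<in>S. \<Sum>b\<in>S. (\<integral>x. centred a x * centred b x \<partial>M))"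
    using square_integrable unfolding centred_def
    by (simp add: integrable_mult_square_integrable square_integrable_diff square_integrable_const
        Bochner_Integration.integral_sum)
  also have "\<dots> = (\<Sum>a\<in>S. \<Sum>b\<in>S. if a = b then variance (U a) else 0)"
    using integral_centred_mult_eq_0_if_indep[OF indep] integrable
    by (intro sum.cong refl) (auto simp: centred_def power2_eq_square)
  also have "\<dots> = (\<Sum>a\<in>S. variance (U a))"
    using \<open>finite S\<close> by simp
  finally show ?thesis .
qed

lemma (in prob_space) variance_diff_indep:
  fixes U V :: "'a \<Rightarrow> real"
  assumes "indep_var borel U borel V" "square_integrable M U" "square_integrable M V"
  shows "variance (\<lambda>x. U x - V x) = variance U + variance V"
proof -
  have integrable: "integrable M U" "integrable M V"
    using assms(2,3) by (auto intro: integrable_if_square_integrable)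
  have centred: "square_integrable M (\<lambda>x. U x - expectation U)" "square_integrable M (\<lambda>x. V x - expectation V)"
    using assms(2,3) by (auto intro!: square_integrable_diff square_integrable_const)
  have "variance (\<lambda>x. U x - V x) = (\<integral>x. (U x - expectation U)\<^sup>2 + (V x - expectation V)\<^sup>2
      - 2 * ((U x - expectation U) * (V x - expectation V)) \<partial>M)"
    using integrable
    by (intro Bochner_Integration.integral_cong) (auto simp: power2_eq_square algebra_simps)
  also have "\<dots> = variance U + variance V
      - 2 * (\<integral>x. (U x - expectation U) * (V x - expectation V) \<partial>M)"
    using centred integrable_mult_square_integrable[OF centred] by (simp add: square_integrable_def)
  also have "\<dots> = variance U + variance V"
    using integral_centred_mult_eq_0_if_indep[OF assms(1) integrable] by simp
  finally show ?thesis .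
qed

lemma (in prob_space) variance_cmult:
  fixes U :: "'a \<Rightarrow> real"
  shows "variance (\<lambda>x. c * U x) = c\<^sup>2 * variance U"
proof -
  have "variance (\<lambda>x. c * U x) = (\<integral>x. c\<^sup>2 * (U x - expectation U)\<^sup>2 \<partial>M)"
    by (intro Bochner_Integration.integral_cong) (auto simp: power2_eq_square algebra_simps)
  then show ?thesis by simp
qed

section \<open>Sample mean and sample variance\<close>

lemma sample_mean_eq_scaled_sum: "sample_mean Y R = (\<lambda>\<omega>. (1 / real R) * (\<Sum>k=1..R. Y k \<omega>))"
  by (simp add: fun_eq_iff sample_mean_def)

lemma sample_mean_cong:
  "(\<And>k. k \<in> {1..R} \<Longrightarrow> Y k \<omega> = Y' k \<omega>') \<Longrightarrow> sample_mean Y R \<omega> = sample_mean Y' R \<omega>'"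
  by (simp add: sample_mean_def)

lemma sample_var_cong:
  "(\<And>k. k \<in> {1..R} \<Longrightarrow> Y k \<omega> = Y' k \<omega>') \<Longrightarrow> sample_var Y R \<omega> = sample_var Y' R \<omega>'"
  using sample_mean_cong[of R Y \<omega> Y' \<omega>'] by (simp add: sample_var_def)

lemma sample_var_shift:
  "sample_var Y R \<omega> = ((\<Sum>k=1..R. (Y k \<omega> - m)\<^sup>2) - real R * (sample_mean Y R \<omega> - m)\<^sup>2) / (real R - 1)"
proof -
  define mean where "mean = sample_mean Y R \<omega>"
  have sum_centred: "(\<Sum>k=1..R. (Y k \<omega> - m)) = real R * (mean - m)"
    by (cases "R = 0") (simp_all add: mean_def sample_mean_def sum_subtractf algebra_simps)
  have "(\<Sum>k=1..R. (Y k \<omega> - mean)\<^sup>2)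
      = (\<Sum>k=1..R. (Y k \<omega> - m)\<^sup>2 - 2 * (mean - m) * (Y k \<omega> - m) + (mean - m)\<^sup>2)"
    by (intro sum.cong) (auto simp: power2_eq_square algebra_simps)
  also have "\<dots> = (\<Sum>k=1..R. (Y k \<omega> - m)\<^sup>2) - 2 * (mean - m) * (\<Sum>k=1..R. (Y k \<omega> - m))
      + real R * (mean - m)\<^sup>2"
    by (simp add: sum.distrib sum_subtractf flip: sum_distrib_left)
  also have "\<dots> = (\<Sum>k=1..R. (Y k \<omega> - m)\<^sup>2) - real R * (mean - m)\<^sup>2"
    unfolding sum_centred by (simp add: power2_eq_square algebra_simps)
  finally show ?thesis by (simp add: sample_var_def mean_def)
qed

lemma sample_var_nonneg: "0 \<le> sample_var Y R \<omega>"
  unfolding sample_var_def by (cases "R = 0") (simp_all add: divide_nonneg_nonneg sum_nonneg)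

lemma sample_var_square_le:
  "(sample_var Y R \<omega>)\<^sup>2 \<le> real R / (real R - 1)\<^sup>2 * (\<Sum>k=1..R. (Y k \<omega> - m) ^ 4)"
proof (cases "R \<ge> 2")
  case True
  define S where "S = (\<Sum>k=1..R. (Y k \<omega> - m)\<^sup>2)"
  have "sample_var Y R \<omega> \<le> S / (real R - 1)"
    unfolding sample_var_shift[of Y R \<omega> m] S_def using True by (intro divide_right_mono) auto
  then have "(sample_var Y R \<omega>)\<^sup>2 \<le> (S / (real R - 1))\<^sup>2"
    by (rule power_mono[OF _ sample_var_nonneg])
  also have "\<dots> = S\<^sup>2 / (real R - 1)\<^sup>2"
    by (simp add: power_divide)
  also have "S\<^sup>2 \<le> real R * (\<Sum>k=1..R. (Y k \<omega> - m) ^ 4)"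
    using Cauchy_Schwarz_ineq_sum[of "\<lambda>_. 1" "\<lambda>k. (Y k \<omega> - m)\<^sup>2" "{1..R}"]
    by (simp add: S_def flip: power_mult)
  then have "S\<^sup>2 / (real R - 1)\<^sup>2 \<le> real R * (\<Sum>k=1..R. (Y k \<omega> - m) ^ 4) / (real R - 1)\<^sup>2"
    by (intro divide_right_mono) auto
  finally show ?thesis by simp
next
  case False
  then have "R = 0 \<or> R = 1" by auto
  then show ?thesis by (auto simp: sample_var_def)
qed

lemma borel_measurable_sample_mean:
  "(\<And>k. k \<in> {1..R} \<Longrightarrow> Y k \<in> borel_measurable M) \<Longrightarrow> sample_mean Y R \<in> borel_measurable M"
  unfolding sample_mean_eq_scaled_sum by (intro borel_measurable_times borel_measurable_sum) auto

lemma borel_measurable_sample_var: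
  "(\<And>k. k \<in> {1..R} \<Longrightarrow> Y k \<in> borel_measurable M) \<Longrightarrow> sample_var Y R \<in> borel_measurable M"
  using borel_measurable_sample_mean[of R Y M] unfolding sample_var_def[abs_def]
  by (intro borel_measurable_divide borel_measurable_sum borel_measurable_power borel_measurable_diff) auto

lemma (in finite_measure) integrable_sum_power4_diff:
  fixes Y :: "nat \<Rightarrow> 'a \<Rightarrow> real"
  assumes "\<And>k. k \<in> {1..R} \<Longrightarrow> Y k \<in> borel_measurable M"
    and "\<And>k. k \<in> {1..R} \<Longrightarrow> integrable M (\<lambda>\<omega>. (Y k \<omega>) ^ 4)"
  shows "integrable M (\<lambda>\<omega>. c * (\<Sum>k=1..R. (Y k \<omega> - m) ^ 4))"
  by (intro integrable_mult_right Bochner_Integration.integrable_sum integrable_power4_diff assms) auto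

lemma (in finite_measure) square_integrable_sample_var:
  assumes "\<And>k. k \<in> {1..R} \<Longrightarrow> Y k \<in> borel_measurable M"
    and "\<And>k. k \<in> {1..R} \<Longrightarrow> integrable M (\<lambda>\<omega>. (Y k \<omega>) ^ 4)"
  shows "square_integrable M (sample_var Y R)"
  unfolding square_integrable_def
proof
  define bound where "bound \<omega> = real R / (real R - 1)\<^sup>2 * (\<Sum>k=1..R. (Y k \<omega> - 0) ^ 4)" for \<omega>
  show "integrable M (\<lambda>\<omega>. (sample_var Y R \<omega>)\<^sup>2)"
  proof (rule Bochner_Integration.integrable_bound)
    show "integrable M bound"
      unfolding bound_def by (rule integrable_sum_power4_diff[OF assms])
    show "AE \<omega> in M. norm ((sample_var Y R \<omega>)\<^sup>2) \<le> norm (bound \<omega>)"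
    proof (rule AE_I2)
      fix \<omega>
      have "norm ((sample_var Y R \<omega>)\<^sup>2) = (sample_var Y R \<omega>)\<^sup>2" by simp
      also have "\<dots> \<le> bound \<omega>" unfolding bound_def by (rule sample_var_square_le)
      also have "\<dots> \<le> norm (bound \<omega>)" unfolding real_norm_def by (rule abs_ge_self)
      finally show "norm ((sample_var Y R \<omega>)\<^sup>2) \<le> norm (bound \<omega>)" .
    qed
  qed (use borel_measurable_sample_var[OF assms(1)] in simp)
qed (rule borel_measurable_sample_var[OF assms(1)])

lemma (in prob_space) variance_sample_var_le:
  assumes "\<And>k. k \<in> {1..R} \<Longrightarrow> Y k \<in> borel_measurable M"
    and "\<And>k. k \<in> {1..R} \<Longrightarrow> integrable M (\<lambda>\<omega>. (Y k \<omega>) ^ 4)"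
  shows "variance (sample_var Y R)
    \<le> real R / (real R - 1)\<^sup>2 * (\<Sum>k=1..R. \<integral>\<omega>. (Y k \<omega> - m) ^ 4 \<partial>M)"
proof -
  have square_integrable: "square_integrable M (sample_var Y R)"
    by (rule square_integrable_sample_var[OF assms])
  have "variance (sample_var Y R) \<le> expectation (\<lambda>\<omega>. (sample_var Y R \<omega>)\<^sup>2)"
    using square_integrable integrable_if_square_integrable[OF square_integrable]
    by (subst variance_eq) (auto simp: square_integrable_def)
  also have "\<dots> \<le> expectation (\<lambda>\<omega>. real R / (real R - 1)\<^sup>2 * (\<Sum>k=1..R. (Y k \<omega> - m) ^ 4))"
    using square_integrable
    by (intro integral_mono integrable_sum_power4_diff assms sample_var_square_le)
       (simp_all add: square_integrable_def)
  also have "\<dots> = real R / (real R - 1)\<^sup>2 * (\<Sum>k=1..R. \<integral>\<omega>. (Y k \<omega> - m) ^ 4 \<partial>M)"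
    using assms integrable_power4_diff by (simp add: Bochner_Integration.integral_sum)
  finally show ?thesis .
qed

lemma (in prob_space) expectation_sample_var_shift:
  assumes "\<And>k. k \<in> {1..R} \<Longrightarrow> square_integrable M (Y k)"
  shows "expectation (sample_var Y R) = ((\<Sum>k=1..R. expectation (\<lambda>\<omega>. (Y k \<omega> - m)\<^sup>2))
    - real R * expectation (\<lambda>\<omega>. (sample_mean Y R \<omega> - m)\<^sup>2)) / (real R - 1)"
proof -
  have centred: "square_integrable M (\<lambda>\<omega>. Y k \<omega> - m)" if "k \<in> {1..R}" for k
    using that by (intro square_integrable_diff assms square_integrable_const)
  have "square_integrable M (\<lambda>\<omega>. sample_mean Y R \<omega> - m)"
    unfolding sample_mean_eq_scaled_sum
    by (intro square_integrable_diff square_integrable_cmult square_integrable_sum assms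
        square_integrable_const)
  then have mean_integrable: "integrable M (\<lambda>\<omega>. real R * (sample_mean Y R \<omega> - m)\<^sup>2)"
    by (simp add: square_integrable_def)
  have sum_integrable: "integrable M (\<lambda>\<omega>. \<Sum>k=1..R. (Y k \<omega> - m)\<^sup>2)"
    using centred by (intro Bochner_Integration.integrable_sum) (simp add: square_integrable_def)
  have "expectation (sample_var Y R)
      = expectation (\<lambda>\<omega>. (\<Sum>k=1..R. (Y k \<omega> - m)\<^sup>2) - real R * (sample_mean Y R \<omega> - m)\<^sup>2)
        / (real R - 1)"
    unfolding integral_divide_zero[symmetric]
    by (rule arg_cong[where f = expectation]) (intro ext sample_var_shift)
  also have "expectation (\<lambda>\<omega>. (\<Sum>k=1..R. (Y k \<omega> - m)\<^sup>2) - real R * (sample_mean Y R \<omega> - m)\<^sup>2)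
      = expectation (\<lambda>\<omega>. \<Sum>k=1..R. (Y k \<omega> - m)\<^sup>2)
        - expectation (\<lambda>\<omega>. real R * (sample_mean Y R \<omega> - m)\<^sup>2)"
    by (rule Bochner_Integration.integral_diff[OF sum_integrable mean_integrable])
  also have "expectation (\<lambda>\<omega>. \<Sum>k=1..R. (Y k \<omega> - m)\<^sup>2)
      = (\<Sum>k=1..R. expectation (\<lambda>\<omega>. (Y k \<omega> - m)\<^sup>2))"
    using centred by (intro Bochner_Integration.integral_sum) (simp add: square_integrable_def)
  finally show ?thesis
    by simp
qed

locale pairwise_indep_sample = prob_space +
  fixes Y :: "nat \<Rightarrow> 'a \<Rightarrow> real" and R :: nat and \<mu> \<sigma>2 :: real
  assumes square_integrable_sample: "\<And>k. k \<in> {1..R} \<Longrightarrow> square_integrable M (Y k)"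
    and expectation_sample: "\<And>k. k \<in> {1..R} \<Longrightarrow> expectation (Y k) = \<mu>"
    and variance_sample: "\<And>k. k \<in> {1..R} \<Longrightarrow> variance (Y k) = \<sigma>2"
    and indep_var_sample:
      "\<And>k k'. k \<in> {1..R} \<Longrightarrow> k' \<in> {1..R} \<Longrightarrow> k \<noteq> k' \<Longrightarrow> indep_var borel (Y k) borel (Y k')"
begin

lemma square_integrable_sample_mean: "square_integrable M (sample_mean Y R)"
  unfolding sample_mean_eq_scaled_sum
  by (intro square_integrable_cmult square_integrable_sum square_integrable_sample)

lemma expectation_sample_mean:
  assumes "0 < R"
  shows "expectation (sample_mean Y R) = \<mu>"
proof -
  have "expectation (sample_mean Y R) = (1 / real R) * (\<Sum>k=1..R. expectation (Y k))"
    unfolding sample_mean_eq_scaled_sum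
    using integrable_if_square_integrable[OF square_integrable_sample]
    by (simp add: Bochner_Integration.integral_sum)
  then show ?thesis
    using assms by (simp add: expectation_sample)
qed

lemma variance_sample_mean: "variance (sample_mean Y R) = \<sigma>2 / real R"
proof -
  have "variance (sample_mean Y R) = (1 / real R)\<^sup>2 * variance (\<lambda>\<omega>. \<Sum>k=1..R. Y k \<omega>)"
    unfolding sample_mean_eq_scaled_sum by (rule variance_cmult)
  also have "variance (\<lambda>\<omega>. \<Sum>k=1..R. Y k \<omega>) = (\<Sum>k=1..R. variance (Y k))"
    using square_integrable_sample indep_var_sample by (intro variance_sum_indep) auto
  also have "\<dots> = real R * \<sigma>2"
    by (simp add: variance_sample)
  finally show ?thesis
    by (simp add: power2_eq_square)
qed

lemma expectation_sample_var:
  assumes "2 \<le> R"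
  shows "expectation (sample_var Y R) = \<sigma>2"
proof -
  have "expectation (sample_var Y R) = ((\<Sum>k=1..R. expectation (\<lambda>\<omega>. (Y k \<omega> - \<mu>)\<^sup>2))
      - real R * expectation (\<lambda>\<omega>. (sample_mean Y R \<omega> - \<mu>)\<^sup>2)) / (real R - 1)"
    by (rule expectation_sample_var_shift) (rule square_integrable_sample)
  also have "\<dots> = (real R * \<sigma>2 - real R * (\<sigma>2 / real R)) / (real R - 1)"
  proof -
    have "expectation (\<lambda>\<omega>. (Y k \<omega> - \<mu>)\<^sup>2) = \<sigma>2" if "k \<in> {1..R}" for k
      using variance_sample[OF that] by (simp add: expectation_sample[OF that])
    then show ?thesis
      using variance_sample_mean assms by (simp add: expectation_sample_mean)
  qed
  also have "\<dots> = \<sigma>2"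
    using assms by (simp add: field_simps)
  finally show ?thesis .
qed

end

lemma central_fourth_moment_eq_kurtosis:
  "prob_space.variance M Z \<noteq> 0
    \<Longrightarrow> (\<integral>x. (Z x - (\<integral>y. Z y \<partial>M)) ^ 4 \<partial>M) = kurtosis M Z * (prob_space.variance M Z)\<^sup>2"
  by (simp add: kurtosis_def)

lemma sum_variance_squares_eq_gamma2:
  assumes "sigma_bar2 M X I \<noteq> 0"
  shows "(\<Sum>i\<in>I. (prob_space.variance M (X i))\<^sup>2)
    = real (card I) * (sigma_bar2 M X I)\<^sup>2 * (1 + gamma2 M X I)"
proof -
  have "card I \<noteq> 0"
    using assms by (auto simp: sigma_bar2_def)
  then show ?thesis
    using assms by (simp add: gamma2_def field_simps)
qed

lemma sum_variance_squares_le: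
  assumes "finite I" "\<And>i. i \<in> I \<Longrightarrow> prob_space.variance M (X i) > 0" "\<bar>gamma2 M X I\<bar> \<le> B"
  shows "(\<Sum>i\<in>I. (prob_space.variance M (X i))\<^sup>2) \<le> (1 + B) * (real (card I) * (sigma_bar2 M X I)\<^sup>2)"
proof (cases "I = {}")
  case False
  then have "0 < (\<Sum>i\<in>I. prob_space.variance M (X i))"
    using assms(1,2) by (intro sum_pos) auto
  then have "sigma_bar2 M X I \<noteq> 0"
    using \<open>I \<noteq> {}\<close> assms(1) by (simp add: sigma_bar2_def)
  then have "(\<Sum>i\<in>I. (prob_space.variance M (X i))\<^sup>2)
      = (1 + gamma2 M X I) * (real (card I) * (sigma_bar2 M X I)\<^sup>2)"
    by (simp add: sum_variance_squares_eq_gamma2)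
  also have "\<dots> \<le> (1 + B) * (real (card I) * (sigma_bar2 M X I)\<^sup>2)"
    using assms(3) by (intro mult_right_mono) auto
  finally show ?thesis .
qed simp

section \<open>Replicated sampling\<close>

locale replicated_sampling = prob_space +
  fixes I :: "'i set" and X :: "'i \<Rightarrow> 'a \<Rightarrow> real" and Y :: "'i \<Rightarrow> nat \<Rightarrow> 'a \<Rightarrow> real"
    and R :: "'i \<Rightarrow> nat"
  assumes finite_index: "finite I"
    and integrable_power4: "\<And>i. i \<in> I \<Longrightarrow> integrable M (\<lambda>\<omega>. (X i \<omega>) ^ 4)"
    and distr_copies: "\<And>i k. i \<in> I \<Longrightarrow> k \<in> {1..R i} \<Longrightarrow> distr M borel (Y i k) = distr M borel (X i)"
    and indep_vars_all: "indep_vars (\<lambda>_. borel) (all_vars X Y) (all_index I R)"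
    and replications_ge_2: "\<And>i. i \<in> I \<Longrightarrow> 2 \<le> R i"
begin

lemma measurable_X: "i \<in> I \<Longrightarrow> X i \<in> borel_measurable M"
  using indep_vars_all by (force simp: indep_vars_def all_index_def all_vars_def)

lemma measurable_Y: "i \<in> I \<Longrightarrow> k \<in> {1..R i} \<Longrightarrow> Y i k \<in> borel_measurable M"
  using indep_vars_all by (force simp: indep_vars_def all_index_def all_vars_def)

lemma integral_copy_eq:
  fixes g :: "real \<Rightarrow> real"
  assumes "i \<in> I" "k \<in> {1..R i}" "g \<in> borel_measurable borel"
  shows "integrable M (\<lambda>\<omega>. g (Y i k \<omega>)) \<longleftrightarrow> integrable M (\<lambda>\<omega>. g (X i \<omega>))"
    and "(\<integral>\<omega>. g (Y i k \<omega>) \<partial>M) = (\<integral>\<omega>. g (X i \<omega>) \<partial>M)"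
  using integral_comp_eq_if_distr_eq[OF distr_copies[OF assms(1,2)] measurable_Y[OF assms(1,2)]
      measurable_X[OF assms(1)] assms(3)]
  by simp_all

lemma integrable_power4_copy: "i \<in> I \<Longrightarrow> k \<in> {1..R i} \<Longrightarrow> integrable M (\<lambda>\<omega>. (Y i k \<omega>) ^ 4)"
  using integral_copy_eq(1)[of i k "\<lambda>t. t ^ 4"] integrable_power4 by simp

lemma central_moment_copy_eq:
  "i \<in> I \<Longrightarrow> k \<in> {1..R i} \<Longrightarrow> (\<integral>\<omega>. (Y i k \<omega> - c) ^ n \<partial>M) = (\<integral>\<omega>. (X i \<omega> - c) ^ n \<partial>M)"
  using integral_copy_eq(2)[of i k "\<lambda>t. (t - c) ^ n"] by simp

lemma square_integrable_X: "i \<in> I \<Longrightarrow> square_integrable M (X i)"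
  by (intro square_integrable_if_integrable_power4 measurable_X integrable_power4)

lemma indep_var_X_sample_mean:
  assumes "i \<in> I"
  shows "indep_var borel (X i) borel (sample_mean (Y i) (R i))"
proof -
  define copies :: "('i + 'i \<times> nat) set" where "copies = Inr ` ({i} \<times> {1..R i})"
  have "indep_var borel (\<lambda>\<omega>. (\<lambda>h. h (Inl i)) (restrict (\<lambda>j. all_vars X Y j \<omega>) {Inl i}))
      borel (\<lambda>\<omega>. sample_mean (\<lambda>k h. h (Inr (i, k))) (R i) (restrict (\<lambda>j. all_vars X Y j \<omega>) copies))"
    using assms
    by (intro indep_var_restrict_compose[OF indep_vars_all] borel_measurable_sample_mean
        measurable_component_singleton) (auto simp: copies_def all_index_def)
  moreover have "sample_mean (\<lambda>k h. h (Inr (i, k))) (R i) (restrict (\<lambda>j. all_vars X Y j \<omega>) copies)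
      = sample_mean (Y i) (R i) \<omega>" for \<omega>
    by (intro sample_mean_cong) (simp add: copies_def all_vars_def)
  ultimately show ?thesis
    by (simp add: all_vars_def)
qed

lemma square_integrable_copy: "i \<in> I \<Longrightarrow> k \<in> {1..R i} \<Longrightarrow> square_integrable M (Y i k)"
  by (intro square_integrable_if_integrable_power4 measurable_Y integrable_power4_copy)

lemma expectation_copy: "i \<in> I \<Longrightarrow> k \<in> {1..R i} \<Longrightarrow> expectation (Y i k) = expectation (X i)"
  using central_moment_copy_eq[of i k 0 1] by simp

lemma indep_var_copies:
  assumes "i \<in> I" "k \<in> {1..R i}" "k' \<in> {1..R i}" "k \<noteq> k'"
  shows "indep_var borel (Y i k) borel (Y i k')"
  using indep_var_restrict_compose[OF indep_vars_all, of "{Inr (i, k)}" "{Inr (i, k')}"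
      "\<lambda>h. h (Inr (i, k))" borel "\<lambda>h. h (Inr (i, k'))" borel] assms
  by (simp add: all_index_def all_vars_def measurable_component_singleton)

lemma pairwise_indep_sample_copies:
  "i \<in> I \<Longrightarrow> pairwise_indep_sample M (Y i) (R i) (expectation (X i)) (variance (X i))"
  by unfold_locales
    (simp_all add: square_integrable_copy expectation_copy central_moment_copy_eq indep_var_copies)

definition block :: "'i \<Rightarrow> ('i + 'i \<times> nat) set" where
  "block i = insert (Inl i) (Inr ` ({i} \<times> {1..R i}))"

definition block_values :: "'i \<Rightarrow> 'a \<Rightarrow> 'i + 'i \<times> nat \<Rightarrow> real" where
  "block_values i \<omega> = restrict (\<lambda>j. all_vars X Y j \<omega>) (block i)"

lemma indep_var_block_functions:
  assumes "i \<in> I" "i' \<in> I" "i \<noteq> i'"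
    and "f \<in> borel_measurable (PiM (block i) (\<lambda>_. borel))"
    and "g \<in> borel_measurable (PiM (block i') (\<lambda>_. borel))"
  shows "indep_var borel (\<lambda>\<omega>. f (block_values i \<omega>)) borel (\<lambda>\<omega>. g (block_values i' \<omega>))"
  unfolding block_values_def
  using assms by (intro indep_var_restrict_compose[OF indep_vars_all])
    (auto simp: block_def all_index_def)

lemma centred_term_eq_block_function:
  "X i \<omega> - sample_mean (Y i) (R i) \<omega>
    = (\<lambda>h. h (Inl i) - sample_mean (\<lambda>k h. h (Inr (i, k))) (R i) h) (block_values i \<omega>)"
  using sample_mean_cong[of "R i" "\<lambda>k h. h (Inr (i, k))" "block_values i \<omega>" "Y i" \<omega>]
  by (simp add: block_values_def block_def all_vars_def)

lemma estimator_term_eq_block_function: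
  "sample_var (Y i) (R i) \<omega> * (1 + 1 / real (R i))
    = (\<lambda>h. sample_var (\<lambda>k h. h (Inr (i, k))) (R i) h * (1 + 1 / real (R i))) (block_values i \<omega>)"
  using sample_var_cong[of "R i" "\<lambda>k h. h (Inr (i, k))" "block_values i \<omega>" "Y i" \<omega>]
  by (simp add: block_values_def block_def all_vars_def)

lemma indep_var_centred_terms:
  "i \<in> I \<Longrightarrow> i' \<in> I \<Longrightarrow> i \<noteq> i' \<Longrightarrow> indep_var
    borel (\<lambda>\<omega>. X i \<omega> - sample_mean (Y i) (R i) \<omega>) borel (\<lambda>\<omega>. X i' \<omega> - sample_mean (Y i') (R i') \<omega>)"
  unfolding centred_term_eq_block_function
  by (intro indep_var_block_functions borel_measurable_diff borel_measurable_sample_mean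
      measurable_component_singleton) (auto simp: block_def)

lemma indep_var_estimator_terms:
  "i \<in> I \<Longrightarrow> i' \<in> I \<Longrightarrow> i \<noteq> i' \<Longrightarrow> indep_var
    borel (\<lambda>\<omega>. sample_var (Y i) (R i) \<omega> * (1 + 1 / real (R i)))
    borel (\<lambda>\<omega>. sample_var (Y i') (R i') \<omega> * (1 + 1 / real (R i')))"
  unfolding estimator_term_eq_block_function
  by (intro indep_var_block_functions borel_measurable_times borel_measurable_sample_var
      measurable_component_singleton) (auto simp: block_def)

lemma square_integrable_centred_term:
  "i \<in> I \<Longrightarrow> square_integrable M (\<lambda>\<omega>. X i \<omega> - sample_mean (Y i) (R i) \<omega>)"
  by (intro square_integrable_diff square_integrable_X
      pairwise_indep_sample.square_integrable_sample_mean[OF pairwise_indep_sample_copies])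

lemma variance_centred_term:
  assumes "i \<in> I"
  shows "variance (\<lambda>\<omega>. X i \<omega> - sample_mean (Y i) (R i) \<omega>) = variance (X i) * (1 + 1 / real (R i))"
proof -
  interpret copies: pairwise_indep_sample M "Y i" "R i" "expectation (X i)" "variance (X i)"
    by (rule pairwise_indep_sample_copies[OF assms])
  have "variance (\<lambda>\<omega>. X i \<omega> - sample_mean (Y i) (R i) \<omega>)
      = variance (X i) + variance (sample_mean (Y i) (R i))"
    by (rule variance_diff_indep[OF indep_var_X_sample_mean[OF assms] square_integrable_X[OF assms]
          copies.square_integrable_sample_mean])
  then show ?thesis
    by (simp add: copies.variance_sample_mean algebra_simps)
qed

lemma square_integrable_estimator_term:
  "i \<in> I \<Longrightarrow> square_integrable M (\<lambda>\<omega>. sample_var (Y i) (R i) \<omega> * (1 + 1 / real (R i)))"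
proof -
  assume "i \<in> I"
  then have "square_integrable M (sample_var (Y i) (R i))"
    by (intro square_integrable_sample_var measurable_Y integrable_power4_copy)
  from square_integrable_cmult[OF this, of "1 + 1 / real (R i)"] show ?thesis
    by (simp add: mult.commute)
qed

lemma expectation_sample_var_copies: "i \<in> I \<Longrightarrow> expectation (sample_var (Y i) (R i)) = variance (X i)"
  by (rule pairwise_indep_sample.expectation_sample_var[OF pairwise_indep_sample_copies replications_ge_2])

lemma variance_estimator_term_le:
  assumes "i \<in> I"
  shows "variance (\<lambda>\<omega>. sample_var (Y i) (R i) \<omega> * (1 + 1 / real (R i)))
    \<le> 9 * (\<integral>\<omega>. (X i \<omega> - expectation (X i)) ^ 4 \<partial>M)"
proof -
  define r where "r = real (R i)"
  define m4 where "m4 = (\<integral>\<omega>. (X i \<omega> - expectation (X i)) ^ 4 \<partial>M)"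
  have r: "2 \<le> r"
    using replications_ge_2[OF assms] by (simp add: r_def)
  have m4: "0 \<le> m4"
    unfolding m4_def by (rule integral_nonneg_AE) simp
  have "variance (\<lambda>\<omega>. sample_var (Y i) (R i) \<omega> * (1 + 1 / r))
      = (1 + 1 / r)\<^sup>2 * variance (sample_var (Y i) (R i))"
    using variance_cmult[of "1 + 1 / r" "sample_var (Y i) (R i)"] by (simp add: mult.commute)
  also have "\<dots> \<le> (1 + 1 / r)\<^sup>2 * (r / (r - 1)\<^sup>2 * (r * m4))"
  proof (rule mult_left_mono)
    have "variance (sample_var (Y i) (R i))
        \<le> r / (r - 1)\<^sup>2 * (\<Sum>k=1..R i. \<integral>\<omega>. (Y i k \<omega> - expectation (X i)) ^ 4 \<partial>M)"
      unfolding r_def using assms by (intro variance_sample_var_le measurable_Y integrable_power4_copy)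
    also have "(\<Sum>k=1..R i. \<integral>\<omega>. (Y i k \<omega> - expectation (X i)) ^ 4 \<partial>M) = r * m4"
      using assms by (simp add: central_moment_copy_eq r_def m4_def)
    finally show "variance (sample_var (Y i) (R i)) \<le> r / (r - 1)\<^sup>2 * (r * m4)" .
  qed simp
  also have "\<dots> = ((1 + 1 / r) * r)\<^sup>2 / (r - 1)\<^sup>2 * m4"
    by (simp add: power2_eq_square)
  also have "(1 + 1 / r) * r = r + 1"
    using r by (simp add: field_simps)
  also have "(r + 1)\<^sup>2 / (r - 1)\<^sup>2 * m4 = ((r + 1) / (r - 1))\<^sup>2 * m4"
    by (simp add: power_divide)
  also have "\<dots> \<le> 3\<^sup>2 * m4"
    using r m4 by (intro mult_right_mono power_mono) (auto simp: field_simps)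
  finally show ?thesis
    by (simp add: r_def m4_def)
qed

lemma var_estimator_eq_sum:
  "var_estimator Y R I = (\<lambda>\<omega>. \<Sum>i\<in>I. sample_var (Y i) (R i) \<omega> * (1 + 1 / real (R i)))"
  by (simp add: fun_eq_iff var_estimator_def)

theorem expectation_var_estimator: "expectation (var_estimator Y R I) = variance (centred_sum X Y R I)"
proof -
  have centred_sum: "centred_sum X Y R I = (\<lambda>\<omega>. \<Sum>i\<in>I. X i \<omega> - sample_mean (Y i) (R i) \<omega>)"
    by (simp add: fun_eq_iff centred_sum_def sum_subtractf)
  have "expectation (var_estimator Y R I)
      = (\<Sum>i\<in>I. expectation (\<lambda>\<omega>. sample_var (Y i) (R i) \<omega> * (1 + 1 / real (R i))))"
    unfolding var_estimator_eq_sum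
    by (intro Bochner_Integration.integral_sum integrable_if_square_integrable
        square_integrable_estimator_term)
  also have "\<dots> = (\<Sum>i\<in>I. variance (X i) * (1 + 1 / real (R i)))"
    by (intro sum.cong refl) (simp add: expectation_sample_var_copies)
  also have "\<dots> = variance (centred_sum X Y R I)"
    unfolding centred_sum
    using finite_index square_integrable_centred_term indep_var_centred_terms
    by (subst variance_sum_indep) (simp_all add: variance_centred_term)
  finally show ?thesis .
qed

theorem variance_var_estimator_le:
  "variance (var_estimator Y R I) \<le> 9 * (\<Sum>i\<in>I. \<integral>\<omega>. (X i \<omega> - expectation (X i)) ^ 4 \<partial>M)"
proof -
  have "variance (var_estimator Y R I)
      = (\<Sum>i\<in>I. variance (\<lambda>\<omega>. sample_var (Y i) (R i) \<omega> * (1 + 1 / real (R i))))"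
    unfolding var_estimator_eq_sum
    using finite_index square_integrable_estimator_term indep_var_estimator_terms
    by (intro variance_sum_indep) auto
  also have "\<dots> \<le> (\<Sum>i\<in>I. 9 * (\<integral>\<omega>. (X i \<omega> - expectation (X i)) ^ 4 \<partial>M))"
    by (intro sum_mono variance_estimator_term_le)
  finally show ?thesis
    by (simp add: sum_distrib_left)
qed

lemma variance_var_estimator_le_gamma2:
  assumes "\<And>i. i \<in> I \<Longrightarrow> variance (X i) > 0" "\<And>i. i \<in> I \<Longrightarrow> kurtosis M (X i) \<le> \<kappa>"
    and "\<bar>gamma2 M X I\<bar> \<le> B"
  shows "variance (var_estimator Y R I)
    \<le> 9 * \<bar>\<kappa>\<bar> * (1 + B) * (real (card I) * (sigma_bar2 M X I)\<^sup>2)"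
proof -
  have "(\<Sum>i\<in>I. \<integral>\<omega>. (X i \<omega> - expectation (X i)) ^ 4 \<partial>M) \<le> (\<Sum>i\<in>I. \<bar>\<kappa>\<bar> * (variance (X i))\<^sup>2)"
  proof (rule sum_mono)
    fix i assume i: "i \<in> I"
    have "kurtosis M (X i) \<le> \<bar>\<kappa>\<bar>"
      using assms(2)[OF i] abs_ge_self order_trans by blast
    then have "kurtosis M (X i) * (variance (X i))\<^sup>2 \<le> \<bar>\<kappa>\<bar> * (variance (X i))\<^sup>2"
      by (rule mult_right_mono) simp
    moreover have "variance (X i) \<noteq> 0"
      using assms(1)[OF i] by simp
    ultimately show "(\<integral>\<omega>. (X i \<omega> - expectation (X i)) ^ 4 \<partial>M) \<le> \<bar>\<kappa>\<bar> * (variance (X i))\<^sup>2"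
      by (simp add: central_fourth_moment_eq_kurtosis)
  qed
  also have "\<dots> \<le> \<bar>\<kappa>\<bar> * ((1 + B) * (real (card I) * (sigma_bar2 M X I)\<^sup>2))"
    unfolding sum_distrib_left[symmetric]
    using finite_index assms(1,3) by (intro mult_left_mono sum_variance_squares_le) auto
  finally show ?thesis
    using variance_var_estimator_le by (simp add: mult.assoc)
qed

end

theorem lemma2:
  fixes M :: "nat \<Rightarrow> 'a measure"
    and I :: "nat \<Rightarrow> 'i set"
    and X :: "nat \<Rightarrow> 'i \<Rightarrow> 'a \<Rightarrow> real"
    and Y :: "nat \<Rightarrow> 'i \<Rightarrow> nat \<Rightarrow> 'a \<Rightarrow> real"
    and R :: "nat \<Rightarrow> 'i \<Rightarrow> nat"
    and \<kappa>max :: real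
  assumes prob: "\<And>n. prob_space (M n)"
    and fin: "\<And>n. finite (I n)"
    and card_inf: "filterlim (\<lambda>n. card (I n)) at_top sequentially"
    and meas: "\<And>n i. i \<in> I n \<Longrightarrow> X n i \<in> borel_measurable (M n)"
    and fourth: "\<And>n i. i \<in> I n \<Longrightarrow> integrable (M n) (\<lambda>\<omega>. (X n i \<omega>) ^ 4)"
    and var_pos: "\<And>n i. i \<in> I n \<Longrightarrow> prob_space.variance (M n) (X n i) > 0"
    and copies: "\<And>n i k. i \<in> I n \<Longrightarrow> k \<in> {1..R n i} \<Longrightarrow>
                   distr (M n) borel (Y n i k) = distr (M n) borel (X n i)"
    and indep: "\<And>n. prob_space.indep_vars (M n) (\<lambda>_. borel) (all_vars (X n) (Y n)) (all_index (I n) (R n))"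
    and R1: "\<And>n i. i \<in> I n \<Longrightarrow> R n i \<ge> 2"
    and R2: "\<And>n i. i \<in> I n \<Longrightarrow> kurtosis (M n) (X n i) \<le> \<kappa>max"
    and R3: "\<exists>B. eventually (\<lambda>n. \<bar>gamma2 (M n) (X n) (I n)\<bar> \<le> B) sequentially"
  shows "(\<forall>n. (\<integral>\<omega>. var_estimator (Y n) (R n) (I n) \<omega> \<partial>M n)
              = prob_space.variance (M n) (centred_sum (X n) (Y n) (R n) (I n)))
         \<and> (\<lambda>n. prob_space.variance (M n) (var_estimator (Y n) (R n) (I n)))
              \<in> O(\<lambda>n. real (card (I n)) * (sigma_bar2 (M n) (X n) (I n)) ^ 2)"
proof
  \<comment> \<open>The bound holds for every n with |gamma2| <= B.\<close>
  have sampling: "replicated_sampling (M n) (I n) (X n) (Y n) (R n)" for n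
    using prob fin fourth copies indep R1
    by (simp add: replicated_sampling_def replicated_sampling_axioms_def)
  show "\<forall>n. (\<integral>\<omega>. var_estimator (Y n) (R n) (I n) \<omega> \<partial>M n)
      = prob_space.variance (M n) (centred_sum (X n) (Y n) (R n) (I n))"
    using replicated_sampling.expectation_var_estimator[OF sampling] by blast
  obtain B where B: "eventually (\<lambda>n. \<bar>gamma2 (M n) (X n) (I n)\<bar> \<le> B) sequentially"
    using R3 by blast
  have "eventually (\<lambda>n. norm (prob_space.variance (M n) (var_estimator (Y n) (R n) (I n)))
      \<le> 9 * \<bar>\<kappa>max\<bar> * (1 + B) * norm (real (card (I n)) * (sigma_bar2 (M n) (X n) (I n))\<^sup>2))
    sequentially"
    using B
  proof eventually_elim
    case (elim n)
    then show ?case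
      using replicated_sampling.variance_var_estimator_le_gamma2[OF sampling var_pos R2 elim]
        prob_space.variance_positive[OF prob]
      by simp
  qed
  then show "(\<lambda>n. prob_space.variance (M n) (var_estimator (Y n) (R n) (I n)))
      \<in> O(\<lambda>n. real (card (I n)) * (sigma_bar2 (M n) (X n) (I n))\<^sup>2)"
    by (rule bigoI)
qed

end
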